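(* Let $D\subseteq\{0,1,\dots,n\}$ and let $f:\mathbb{F}_2^n\to\mathbb{F}_2^n$ be a $D$-neighbor balanced bijection. Then the labeling $x\mapsto \zeta(f(x))+1$ is a $D$-magic labeling of $Q_n$.
   Context: $Q_n$ is the hypercube with vertex set $\mathbb{F}_2^n$, two vertices adjacent iff they differ in exactly one coordinate; $G_i(\boldsymbol{u})$ is the set of vertices at (Hamming) distance $i$ from $\boldsymbol{u}$ and $N_D(\boldsymbol{u})=\bigcup_{i\in D}G_i(\boldsymbol{u})$. For $\boldsymbol{a}=(a_0,\dots,a_{n-1})\in\mathbb{F}_2^n$, $\zeta(\boldsymbol{a})=\sum_{i=0}^{n-1}a_i2^i$ with $a_i\in\{0,1\}$ regarded as integers. A subset $A\subseteq\mathbb{F}_2^n$ is balanced if for every coordinate $i$, the number of $\boldsymbol{a}\in A$ with $a_i=1$ equals $|A|/2$. A bijection $f:\mathbb{F}_2^n\to\mathbb{F}_2^n$ is $D$-neighbor balanced if $f(N_D(\boldsymbol{u}))$ is balanced for every $\boldsymbol{u}\in\mathbb{F}_2^n$. A $D$-magic labeling of $Q_n$ is a bijection $g:\mathbb{F}_2^n\to\{1,\dots,2^n\}$ such that $\sum_{y\in N_D(\boldsymbol{u})}g(y)$ is the same for all $\boldsymbol{u}$. *)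

theory Defs
  imports Main
begin

text \<open>Vertices of Q_n: elements of F_2^n, represented as boolean lists of length n
  (True = 1, False = 0); coordinate i is xs ! i.\<close>

definition cube :: "nat \<Rightarrow> bool list set" where
  "cube n = {a. length a = n}"

definition hdist :: "bool list \<Rightarrow> bool list \<Rightarrow> nat" where
  "hdist a b = card {i. i < length a \<and> a ! i \<noteq> b ! i}"

definition sphere :: "nat \<Rightarrow> bool list \<Rightarrow> nat \<Rightarrow> bool list set" where
  "sphere n u i = {y \<in> cube n. hdist u y = i}"

definition nbhd :: "nat \<Rightarrow> nat set \<Rightarrow> bool list \<Rightarrow> bool list set" where
  "nbhd n D u = (\<Union>i\<in>D. sphere n u i)"

definition zeta :: "bool list \<Rightarrow> nat" where
  "zeta a = (\<Sum>i<length a. (if a ! i then 1 else 0) * 2 ^ i)"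

definition balanced :: "nat \<Rightarrow> bool list set \<Rightarrow> bool" where
  "balanced n A \<longleftrightarrow> (\<forall>i<n. 2 * card {a \<in> A. a ! i} = card A)"

definition neighbor_balanced :: "nat \<Rightarrow> nat set \<Rightarrow> (bool list \<Rightarrow> bool list) \<Rightarrow> bool" where
  "neighbor_balanced n D f \<longleftrightarrow>
     bij_betw f (cube n) (cube n) \<and> (\<forall>u\<in>cube n. balanced n (f ` nbhd n D u))"

definition magic_labeling :: "nat \<Rightarrow> nat set \<Rightarrow> (bool list \<Rightarrow> nat) \<Rightarrow> bool" where
  "magic_labeling n D g \<longleftrightarrow>
     bij_betw g (cube n) {1..2^n} \<and>
     (\<exists>c. \<forall>u\<in>cube n. (\<Sum>y\<in>nbhd n D u. g y) = c)"

end

theory Submission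
  imports Defs
begin

text \<open>If every coordinate is 1 on exactly half of a set A of vertices, then summing the binary
  values \<open>zeta\<close> over A gives \<open>|A| (2^n - 1) / 2\<close>, bit by bit. Applied to \<open>A = f ` N_D(u)\<close>, the sum
  of the labels over \<open>N_D(u)\<close> is therefore \<open>|N_D(u)| (2^n + 1) / 2\<close>, and \<open>|N_D(u)|\<close> does not depend
  on u because translations of the cube preserve Hamming distance.\<close>

lemma finite_cube: "finite (cube n)"
  using finite_lists_length_eq[of "UNIV :: bool set" n] by (simp add: cube_def)

lemma card_cube: "card (cube n) = 2 ^ n"
  using card_lists_length_eq[of "UNIV :: bool set" n] by (simp add: cube_def)

lemma zeta_Nil [simp]: "zeta [] = 0"
  by (simp add: zeta_def)

lemma zeta_Cons [simp]: "zeta (b # a) = (if b then 1 else 0) + 2 * zeta a"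
proof -
  have "zeta (b # a) = (\<Sum>i<Suc (length a). (if (b # a) ! i then 1 else 0) * 2 ^ i)"
    by (simp add: zeta_def)
  also have "\<dots> = (if b then 1 else 0) + (\<Sum>i<length a. (if a ! i then 1 else 0) * 2 ^ Suc i)"
    by (subst sum.lessThan_Suc_shift) simp
  also have "\<dots> = (if b then 1 else 0) + 2 * zeta a"
    by (simp add: zeta_def sum_distrib_left mult.left_commute)
  finally show ?thesis .
qed

lemma zeta_less_power: "zeta a < 2 ^ length a"
  by (induction a) auto

lemma zeta_inject:
  assumes "length a = length b" and "zeta a = zeta b"
  shows "a = b"
  using assms
proof (induction a arbitrary: b)
  case (Cons x a)
  then obtain y b' where b: "b = y # b'"
    by (cases b) auto
  with Cons.prems have "(if x then 1 else 0) + 2 * zeta a = (if y then 1 else 0) + 2 * zeta b'"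
    by simp
  then have "x = y" and "zeta a = zeta b'"
    by (auto split: if_splits) presburger+
  with Cons b show ?case
    by auto
qed simp

lemma bij_betw_zeta_cube: "bij_betw zeta (cube n) {0..<2 ^ n}"
proof -
  have inj: "inj_on zeta (cube n)"
    by (auto simp: inj_on_def cube_def intro: zeta_inject)
  moreover have "zeta ` cube n \<subseteq> {0..<2 ^ n}"
    using zeta_less_power by (auto simp: cube_def)
  moreover have "card (zeta ` cube n) = card {0..<(2::nat) ^ n}"
    using card_image[OF inj] card_cube by simp
  ultimately show ?thesis
    by (simp add: bij_betw_def card_subset_eq)
qed

lemma sum_zeta_eq_sum_card_bits:
  assumes "A \<subseteq> cube n"
  shows "(\<Sum>a\<in>A. zeta a) = (\<Sum>i<n. 2 ^ i * card {a \<in> A. a ! i})"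
proof -
  have fin: "finite A"
    using assms finite_cube finite_subset by blast
  have "(\<Sum>a\<in>A. zeta a) = (\<Sum>a\<in>A. \<Sum>i<n. if a ! i then 2 ^ i else 0)"
    using assms by (intro sum.cong) (auto simp: zeta_def cube_def intro!: sum.cong)
  also have "\<dots> = (\<Sum>i<n. \<Sum>a\<in>A. if a ! i then 2 ^ i else 0)"
    by (rule sum.swap)
  also have "\<dots> = (\<Sum>i<n. 2 ^ i * card {a \<in> A. a ! i})"
    using fin by (simp add: sum.inter_filter[symmetric] mult.commute)
  finally show ?thesis .
qed

lemma sum_power_two_lessThan: "(\<Sum>i<n. (2::nat) ^ i) + 1 = 2 ^ n"
  by (induction n) simp_all

lemma sum_zeta_balanced:
  assumes "A \<subseteq> cube n" and "balanced n A"
  shows "2 * (\<Sum>a\<in>A. zeta a) + card A = card A * 2 ^ n"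
proof -
  have "2 * (\<Sum>a\<in>A. zeta a) = (\<Sum>i<n. 2 ^ i * (2 * card {a \<in> A. a ! i}))"
    by (simp add: sum_zeta_eq_sum_card_bits[OF assms(1)] sum_distrib_left mult.left_commute)
  also have "\<dots> = card A * (\<Sum>i<n. 2 ^ i)"
    using assms(2) by (simp add: balanced_def sum_distrib_left mult.commute)
  finally show ?thesis
    using sum_power_two_lessThan[of n] by (metis add_mult_distrib2 mult.right_neutral)
qed

definition xor_list :: "bool list \<Rightarrow> bool list \<Rightarrow> bool list" where
  "xor_list a b = map2 (\<noteq>) a b"

lemma xor_list_in_cube: "a \<in> cube n \<Longrightarrow> b \<in> cube n \<Longrightarrow> xor_list a b \<in> cube n"
  by (simp add: xor_list_def cube_def)

lemma xor_list_cancel: "a \<in> cube n \<Longrightarrow> b \<in> cube n \<Longrightarrow> xor_list a (xor_list a b) = b"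
  by (auto simp: xor_list_def cube_def intro: nth_equalityI)

lemma hdist_xor_list:
  assumes "w \<in> cube n" "a \<in> cube n" "b \<in> cube n"
  shows "hdist (xor_list w a) (xor_list w b) = hdist a b"
proof -
  have "{i. i < length (xor_list w a) \<and> xor_list w a ! i \<noteq> xor_list w b ! i}
      = {i. i < length a \<and> a ! i \<noteq> b ! i}"
    using assms by (auto simp: xor_list_def cube_def)
  then show ?thesis
    by (simp add: hdist_def)
qed

lemma xor_list_nbhd_subset:
  assumes "w \<in> cube n" and "u \<in> cube n"
  shows "xor_list w ` nbhd n D u \<subseteq> nbhd n D (xor_list w u)"
  using assms by (auto simp: nbhd_def sphere_def hdist_xor_list xor_list_in_cube)

lemma card_nbhd_eq:
  assumes u: "u \<in> cube n" and v: "v \<in> cube n"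
  shows "card (nbhd n D u) = card (nbhd n D v)"
proof -
  define w where "w = xor_list u v"
  have w: "w \<in> cube n"
    using u v by (simp add: w_def xor_list_in_cube)
  have wu: "xor_list w u = v" and wv: "xor_list w v = u"
    using u v by (auto simp: w_def xor_list_def cube_def intro: nth_equalityI)
  have "inj_on (xor_list w) (nbhd n D u)"
    by (rule inj_on_inverseI[where g = "xor_list w"])
      (use w in \<open>auto simp: nbhd_def sphere_def xor_list_cancel\<close>)
  moreover have "xor_list w ` nbhd n D u = nbhd n D v"
  proof
    show "xor_list w ` nbhd n D u \<subseteq> nbhd n D v"
      using xor_list_nbhd_subset[OF w u] wu by simp
    have "nbhd n D v = xor_list w ` xor_list w ` nbhd n D v"
      using w by (force simp: image_image nbhd_def sphere_def xor_list_cancel)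
    also have "\<dots> \<subseteq> xor_list w ` nbhd n D u"
      using xor_list_nbhd_subset[OF w v] wv by (intro image_mono) simp
    finally show "nbhd n D v \<subseteq> xor_list w ` nbhd n D u" .
  qed
  ultimately show ?thesis
    by (metis card_image)
qed

lemma sum_zeta_image_balanced:
  assumes inj: "inj_on f A" and "f ` A \<subseteq> cube n" and "balanced n (f ` A)"
  shows "2 * (\<Sum>y\<in>A. zeta (f y) + 1) = card A * (2 ^ n + 1)"
proof -
  have "2 * (\<Sum>y\<in>A. zeta (f y)) + card A = card A * 2 ^ n"
    using sum_zeta_balanced[OF assms(2,3)] by (simp add: sum.reindex[OF inj] card_image[OF inj])
  moreover have "(\<Sum>y\<in>A. zeta (f y) + 1) = (\<Sum>y\<in>A. zeta (f y)) + card A"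
    unfolding sum.distrib by simp
  ultimately show ?thesis
    by (simp add: algebra_simps)
qed

theorem lemma3p5:
  fixes n :: nat and D :: "nat set" and f :: "bool list \<Rightarrow> bool list"
  assumes "D \<subseteq> {0..n}"
    and "neighbor_balanced n D f"
  shows "magic_labeling n D (\<lambda>x. zeta (f x) + 1)"
proof -
  have f: "bij_betw f (cube n) (cube n)"
    and bal: "\<And>u. u \<in> cube n \<Longrightarrow> balanced n (f ` nbhd n D u)"
    using assms(2) by (auto simp: neighbor_balanced_def)
  have "bij_betw (\<lambda>k::nat. k + 1) {0..<2 ^ n} {1..2 ^ n}"
    by (rule bij_betw_byWitness[where f' = "\<lambda>k. k - 1"]) auto
  with bij_betw_trans[OF f bij_betw_zeta_cube]
  have bij: "bij_betw (\<lambda>x. zeta (f x) + 1) (cube n) {1..2 ^ n}"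
    using bij_betw_trans unfolding comp_def by blast
  define u0 where "u0 = replicate n False"
  have "(\<Sum>y\<in>nbhd n D u. zeta (f y) + 1) = card (nbhd n D u0) * (2 ^ n + 1) div 2"
    if u: "u \<in> cube n" for u
  proof -
    have N: "nbhd n D u \<subseteq> cube n"
      by (auto simp: nbhd_def sphere_def)
    have "inj_on f (nbhd n D u)"
      using N f bij_betw_imp_inj_on inj_on_subset by blast
    moreover have "f ` nbhd n D u \<subseteq> cube n"
      using N f bij_betw_imp_surj_on by blast
    ultimately have "2 * (\<Sum>y\<in>nbhd n D u. zeta (f y) + 1) = card (nbhd n D u) * (2 ^ n + 1)"
      using bal[OF u] by (rule sum_zeta_image_balanced)
    moreover have "card (nbhd n D u) = card (nbhd n D u0)"
      using u by (intro card_nbhd_eq) (simp_all add: u0_def cube_def)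
    ultimately show ?thesis
      by (metis nonzero_mult_div_cancel_left zero_neq_numeral)
  qed
  with bij show ?thesis
    unfolding magic_labeling_def by blast
qed

end
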